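(* Let $t\ge 2$ and let $G$ be a graph of order $n$ with vertex degrees $d_1,\ldots,d_n$. Let $\overline{q}_1,\ldots,\overline{q}_n$ be the eigenvalues of the signless Laplacian of the complement $\overline{G}$. Then the eigenvalues of the signless Laplacian of $\overline{G^{(t)}}$ (the complement of the blowup $G^{(t)}$) are, as a multiset, $t\overline{q}_1+2(t-1),\ldots,t\overline{q}_n+2(t-1)$ together with $tn-td_1-2,\ldots,tn-td_n-2$, where each of $tn-td_1-2,\ldots,tn-td_n-2$ is taken with multiplicity $t-1$.
   Context: Graphs are finite and simple; $\overline{H}$ denotes the complement of a graph $H$. The signless Laplacian of a graph with adjacency matrix $A$ and diagonal degree matrix $D$ is $Q=D+A$. For an integer $t\ge1$, the blowup $G^{(t)}$ is obtained from $G$ by replacing each vertex $u$ by a set $V_u$ of $t$ pairwise nonadjacent vertices and each edge $\{u,v\}$ of $G$ by the complete bipartite graph between $V_u$ and $V_v$ (and no other edges). *)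

theory Defs
  imports "Jordan_Normal_Form.Char_Poly" "HOL-Library.Multiset"
begin

text \<open>A simple graph of order n: vertex set {0..<n}, edge relation E that is
  symmetric and irreflexive on {0..<n} (values outside {0..<n} are irrelevant).\<close>
definition simple_graph :: "nat \<Rightarrow> (nat \<Rightarrow> nat \<Rightarrow> bool) \<Rightarrow> bool" where
  "simple_graph n E \<longleftrightarrow> (\<forall>i<n. \<forall>j<n. E i j \<longrightarrow> E j i) \<and> (\<forall>i<n. \<not> E i i)"

definition degree :: "nat \<Rightarrow> (nat \<Rightarrow> nat \<Rightarrow> bool) \<Rightarrow> nat \<Rightarrow> nat" where
  "degree n E i = card {j. j < n \<and> E i j}"

definition complement :: "(nat \<Rightarrow> nat \<Rightarrow> bool) \<Rightarrow> nat \<Rightarrow> nat \<Rightarrow> bool" where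
  "complement E i j \<longleftrightarrow> i \<noteq> j \<and> \<not> E i j"

text \<open>Blowup G^(t) of a graph on {0..<n}: vertex set {0..<n*t}, where the
  class V_u of vertex u is {u*t ..< u*t+t}; vertex x lies in class x div t.
  x, y are adjacent iff their classes are adjacent in G.\<close>
definition blowup :: "nat \<Rightarrow> (nat \<Rightarrow> nat \<Rightarrow> bool) \<Rightarrow> nat \<Rightarrow> nat \<Rightarrow> bool" where
  "blowup t E x y \<longleftrightarrow> E (x div t) (y div t)"

definition signless_laplacian :: "nat \<Rightarrow> (nat \<Rightarrow> nat \<Rightarrow> bool) \<Rightarrow> real mat" where
  "signless_laplacian n E = mat n n (\<lambda>(i,j).
      if i = j then real (degree n E i) else if E i j then 1 else 0)"

definition eigenvalue_mset :: "real mat \<Rightarrow> real multiset \<Rightarrow> bool" where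
  "eigenvalue_mset A M \<longleftrightarrow> char_poly A = (\<Prod>a\<in>#M. [:- a, 1:])"

end

theory Submission
  imports Defs "Jordan_Normal_Form.Schur_Decomposition"
begin

text \<open>With vertex x of the blowup in class x div t, the signless Laplacian of the complement
  of the blowup is K \<otimes> J + diag c \<otimes> I (J the all-ones t \<times> t matrix), where
  K = J - A(G) and c u = t (n - d u) - 2. On vectors constant on every class it acts as
  t K + diag c = t Q(complement G) + 2 (t - 1) I; on vectors summing to zero on every class it
  acts as diag c \<otimes> I. A basis adapted to this splitting (the class indicators and the
  differences e(u t + k) - e(u t)) conjugates the matrix to block diagonal form, so its
  characteristic polynomial factors accordingly.\<close>

section \<open>Index arithmetic for classes of consecutive vertices\<close>

lemma sum_upt_mult_blocks:
  fixes f :: "nat \<Rightarrow> 'a::comm_monoid_add"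
  shows "(\<Sum>y\<in>{0..<t*n}. f y) = (\<Sum>v<n. \<Sum>k<t. f (v*t + k))"
proof -
  have "(\<Sum>k<t. f (v*t + k)) = sum f {v*t..<v*t + t}" for v
    using sum.shift_bounds_nat_ivl[of f 0 "v*t" t] by (simp add: atLeast0LessThan add.commute)
  then show ?thesis
    using sum.nat_group[of f t n] by (simp add: atLeast0LessThan mult.commute)
qed

lemma mult_add_less_mult:
  fixes v k n t :: nat
  assumes "v < n" "k < t"
  shows "v*t + k < t*n"
proof -
  have "v*t + k < (v+1)*t" using assms by simp
  also have "\<dots> \<le> n*t" using assms by (intro mult_le_mono1) simp
  finally show ?thesis by (simp add: mult.commute)
qed

lemma mult_add_eq_mult_add_iff:
  fixes a b k l t :: nat
  assumes "k < t" "l < t"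
  shows "a*t + k = b*t + l \<longleftrightarrow> a = b \<and> k = l"
proof
  assume "a*t + k = b*t + l"
  then have "(a*t + k) div t = (b*t + l) div t" "(a*t + k) mod t = (b*t + l) mod t" by simp_all
  then show "a = b \<and> k = l" using assms by simp
qed simp

lemma sum_upt_class:
  fixes g :: "nat \<Rightarrow> 'a::comm_monoid_add"
  assumes "j < n"
  shows "(\<Sum>x\<in>{0..<t*n}. if x div t = j then g x else 0) = (\<Sum>k<t. g (j*t + k))"
proof -
  have "(\<Sum>x\<in>{0..<t*n}. if x div t = j then g x else 0)
      = (\<Sum>v<n. if v = j then (\<Sum>k<t. g (v*t + k)) else 0)"
    unfolding sum_upt_mult_blocks by (intro sum.cong refl) auto
  then show ?thesis using assms by simp
qed

lemma card_upt_class: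
  "card {y. y < t*n \<and> P (y div t)} = t * card {v. v < n \<and> P v}"
proof -
  have "card {y. y < t*n \<and> P (y div t)} = (\<Sum>y\<in>{0..<t*n}. if P (y div t) then 1 else 0)"
    by (simp add: sum.If_cases Int_def conj_commute)
  also have "\<dots> = (\<Sum>v<n. if P v then t else 0)"
    unfolding sum_upt_mult_blocks by (intro sum.cong refl) auto
  also have "\<dots> = t * card {v. v < n \<and> P v}"
    by (simp add: sum.If_cases Int_def conj_commute lessThan_def)
  finally show ?thesis .
qed

section \<open>An adapted basis\<close>

text \<open>Columns j with n \<le> j < t n of the adapted basis enumerate the pairs (u, k) with
  u < n and 1 \<le> k < t, via j = n + u (t - 1) + (k - 1); diff_class is u and diff_vertex
  is the vertex u t + k.\<close>

definition diff_class :: "nat \<Rightarrow> nat \<Rightarrow> nat \<Rightarrow> nat" where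
  "diff_class t n j = (j - n) div (t - 1)"

definition diff_vertex :: "nat \<Rightarrow> nat \<Rightarrow> nat \<Rightarrow> nat" where
  "diff_vertex t n j = diff_class t n j * t + (j - n) mod (t - 1) + 1"

lemma le_less_mult_imp_one_less:
  fixes j n t :: nat
  assumes "n \<le> j" "j < t*n"
  shows "1 < t"
proof (rule ccontr)
  assume "\<not> 1 < t"
  then have "t*n \<le> 1*n" by (intro mult_le_mono1) simp
  with assms show False by simp
qed

lemma diff_vertex:
  assumes "n \<le> j" "j < t*n"
  shows "diff_class t n j < n" "diff_vertex t n j < t*n" "diff_class t n j * t < t*n"
    "diff_vertex t n j div t = diff_class t n j" "diff_vertex t n j \<noteq> diff_class t n j * t"
    "diff_vertex t n j = diff_class t n j * t + diff_vertex t n j mod t"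
proof -
  have t: "t - 1 > 0" using le_less_mult_imp_one_less[OF assms] by simp
  have "j - n < n * (t - 1)" using assms by (simp add: diff_mult_distrib2 mult.commute)
  then show u: "diff_class t n j < n"
    unfolding diff_class_def using t by (simp add: div_less_iff_less_mult)
  have "(j - n) mod (t - 1) < t - 1" using t by simp
  then have k: "(j - n) mod (t - 1) + 1 < t" by linarith
  show "diff_vertex t n j < t*n" unfolding diff_vertex_def
    using mult_add_less_mult[OF u k] by (simp add: add.assoc)
  show "diff_class t n j * t < t*n" using mult_add_less_mult[OF u, of 0 t] t by simp
  define m where "m = (j - n) mod (t - 1) + 1"
  have dv: "diff_vertex t n j = diff_class t n j * t + m" and m: "0 < m" "m < t"
    using k by (simp_all add: diff_vertex_def m_def)
  have "diff_vertex t n j div t = diff_class t n j" "diff_vertex t n j mod t = m"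
    unfolding dv using m by simp_all
  then show "diff_vertex t n j div t = diff_class t n j" "diff_vertex t n j \<noteq> diff_class t n j * t"
    "diff_vertex t n j = diff_class t n j * t + diff_vertex t n j mod t"
    using dv m by simp_all
qed

lemma diff_vertex_inj:
  assumes "n \<le> j" "j < t*n" "n \<le> j'" "j' < t*n" "diff_vertex t n j = diff_vertex t n j'"
  shows "j = j'"
proof -
  have t: "t - 1 > 0" using le_less_mult_imp_one_less[OF assms(1,2)] by simp
  have "(j - n) mod (t - 1) < t - 1" "(j' - n) mod (t - 1) < t - 1" using t by simp_all
  then have k: "(j - n) mod (t - 1) + 1 < t" and k': "(j' - n) mod (t - 1) + 1 < t" by linarith+
  have "diff_class t n j * t + ((j - n) mod (t - 1) + 1) = diff_class t n j' * t + ((j' - n) mod (t - 1) + 1)"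
    using assms(5) unfolding diff_vertex_def by (simp only: add.assoc)
  then have "(j - n) div (t - 1) = (j' - n) div (t - 1)" "(j - n) mod (t - 1) = (j' - n) mod (t - 1)"
    unfolding mult_add_eq_mult_add_iff[OF k k'] diff_class_def by simp_all
  then have "j - n = j' - n"
    by (metis div_mult_mod_eq)
  then show ?thesis using assms by simp
qed

definition class_basis :: "nat \<Rightarrow> nat \<Rightarrow> 'a::ring_1 mat" where
  "class_basis t n = mat (t*n) (t*n) (\<lambda>(x,j).
     if j < n then (if x div t = j then 1 else 0)
     else (if x = diff_vertex t n j then 1 else 0) - (if x = diff_class t n j * t then 1 else 0))"

definition class_basis_inv :: "nat \<Rightarrow> nat \<Rightarrow> 'a::field mat" where
  "class_basis_inv t n = mat (t*n) (t*n) (\<lambda>(j,x).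
     if j < n then (if x div t = j then 1 / of_nat t else 0)
     else (if x = diff_vertex t n j then 1 else 0) - (if x div t = diff_class t n j then 1 / of_nat t else 0))"

lemma class_basis_carrier: "class_basis t n \<in> carrier_mat (t*n) (t*n)"
  by (simp add: class_basis_def)

lemma class_basis_inv_carrier: "class_basis_inv t n \<in> carrier_mat (t*n) (t*n)"
  by (simp add: class_basis_inv_def)

lemma index_mult_mat_sum:
  assumes "A \<in> carrier_mat m k" "B \<in> carrier_mat k l" "i < m" "j < l"
  shows "(A * B) $$ (i,j) = (\<Sum>x\<in>{0..<k}. A $$ (i,x) * B $$ (x,j))"
  using assms by (auto simp: scalar_prod_def intro!: sum.cong)

lemma mult_class_basis_col:
  fixes g :: "nat \<Rightarrow> 'a::ring_1"
  assumes "j < t*n"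
  shows "(\<Sum>x\<in>{0..<t*n}. g x * class_basis t n $$ (x,j)) =
    (if j < n then (\<Sum>k<t. g (j*t + k)) else g (diff_vertex t n j) - g (diff_class t n j * t))"
proof (cases "j < n")
  case True
  have "(\<Sum>x\<in>{0..<t*n}. g x * class_basis t n $$ (x,j)) = (\<Sum>x\<in>{0..<t*n}. if x div t = j then g x else 0)"
    using assms True by (intro sum.cong refl) (simp add: class_basis_def)
  then show ?thesis using sum_upt_class[OF True] True by simp
next
  case False
  have "(\<Sum>x\<in>{0..<t*n}. g x * class_basis t n $$ (x,j)) =
     (\<Sum>x\<in>{0..<t*n}. if x = diff_vertex t n j then g x else 0)
     - (\<Sum>x\<in>{0..<t*n}. if x = diff_class t n j * t then g x else 0)"
    unfolding sum_subtractf[symmetric] using assms False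
    by (intro sum.cong refl) (simp add: class_basis_def right_diff_distrib)
  also have "\<dots> = g (diff_vertex t n j) - g (diff_class t n j * t)"
    using diff_vertex(2,3)[of n j t] assms False by (simp add: sum.delta)
  finally show ?thesis using False by simp
qed

lemma class_basis_inv_class_column:
  assumes t: "t > 0" and j: "j < t*n" and j': "j' < n"
  shows "(\<Sum>k<t. class_basis_inv t n $$ (j, j'*t + k)) = (if j = j' then 1 else (0::'a::field_char_0))"
proof -
  let ?Q = "class_basis_inv t n :: 'a mat"
  have lt: "k < t \<Longrightarrow> j'*t + k < t*n" and div: "k < t \<Longrightarrow> (j'*t + k) div t = j'" for k
    using mult_add_less_mult[OF j'] by simp_all
  show ?thesis
  proof (cases "j < n")
    case True
    have "(\<Sum>k<t. ?Q $$ (j, j'*t + k)) = (\<Sum>k<t. if j = j' then 1 / of_nat t else 0)"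
      using True lt div j by (intro sum.cong refl) (simp add: class_basis_inv_def)
    then show ?thesis using t by simp
  next
    case False
    then have "n \<le> j" by simp
    note d = diff_vertex[OF this j]
    have hit: "j'*t + k = diff_vertex t n j \<longleftrightarrow> j' = diff_class t n j \<and> k = diff_vertex t n j mod t"
      if "k < t" for k
      using mult_add_eq_mult_add_iff[of k t "diff_vertex t n j mod t" j' "diff_class t n j"] d(6) t that
      by simp
    have "(\<Sum>k<t. ?Q $$ (j, j'*t + k)) = (\<Sum>k<t. (if j' = diff_class t n j \<and> k = diff_vertex t n j mod t
        then 1 else 0) - (if j' = diff_class t n j then 1 / of_nat t else 0))"
      using False lt div hit j by (intro sum.cong refl) (simp add: class_basis_inv_def)
    also have "\<dots> = 0"
      using t by (simp add: sum_subtractf sum.delta)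
    finally show ?thesis using False j' by auto
  qed
qed

lemma class_basis_inv_diff_column:
  assumes j: "j < t*n" and nj': "n \<le> j'" and j': "j' < t*n"
  shows "class_basis_inv t n $$ (j, diff_vertex t n j') - class_basis_inv t n $$ (j, diff_class t n j' * t)
    = (if j = j' then 1 else (0::'a::field))"
proof -
  let ?Q = "class_basis_inv t n :: 'a mat"
  note d' = diff_vertex[OF nj' j']
  show ?thesis
  proof (cases "j < n")
    case True
    then show ?thesis using nj' d' j' by (simp add: class_basis_inv_def)
  next
    case False
    then have nj: "n \<le> j" by simp
    note d = diff_vertex[OF nj j]
    have inj: "diff_vertex t n j' = diff_vertex t n j \<longleftrightarrow> j = j'"
      using diff_vertex_inj[OF nj j nj' j'] by auto
    have t: "t > 0" using le_less_mult_imp_one_less[OF nj j] by simp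
    have "diff_class t n j' * t \<noteq> diff_vertex t n j"
      using d(4,5) t by (metis nonzero_mult_div_cancel_right neq0_conv)
    then have "?Q $$ (j, diff_class t n j' * t) = 0
        - (if diff_class t n j' = diff_class t n j then 1 / of_nat t else 0)"
      using False d'(3) j t by (simp add: class_basis_inv_def)
    moreover have "?Q $$ (j, diff_vertex t n j') = (if j = j' then 1 else 0)
        - (if diff_class t n j' = diff_class t n j then 1 / of_nat t else 0)"
      using False d'(2) j by (simp add: class_basis_inv_def d'(4) inj)
    ultimately show ?thesis by simp
  qed
qed

lemma class_basis_inv_mult:
  assumes "t > 0"
  shows "class_basis_inv t n * class_basis t n = (1\<^sub>m (t*n) :: 'a::field_char_0 mat)"
proof (rule eq_matI)
  fix j j' assume "j < dim_row (1\<^sub>m (t*n) :: 'a mat)" "j' < dim_col (1\<^sub>m (t*n) :: 'a mat)"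
  then have j: "j < t*n" and j': "j' < t*n" by auto
  let ?Q = "class_basis_inv t n :: 'a mat"
  have "(?Q * class_basis t n) $$ (j,j') = (if j' < n then (\<Sum>k<t. ?Q $$ (j, j'*t + k))
     else ?Q $$ (j, diff_vertex t n j') - ?Q $$ (j, diff_class t n j' * t))"
    unfolding index_mult_mat_sum[OF class_basis_inv_carrier class_basis_carrier j j']
    by (rule mult_class_basis_col[OF j'])
  also have "\<dots> = 1\<^sub>m (t*n) $$ (j,j')"
  proof (cases "j' < n")
    case True
    then show ?thesis unfolding class_basis_inv_class_column[OF assms j True] using j j' by simp
  next
    case False
    then have nj': "n \<le> j'" by simp
    show ?thesis unfolding class_basis_inv_diff_column[OF j nj' j'] using False j j' by simp
  qed
  finally show "(?Q * class_basis t n) $$ (j,j') = 1\<^sub>m (t*n) $$ (j,j')" .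
qed (simp_all add: class_basis_def class_basis_inv_def)

section \<open>Blown-up matrices\<close>

text \<open>blowup_mat t K c is K \<otimes> J + diag c \<otimes> I, with J the all-ones and I the identity
  t \<times> t matrix, in the vertex numbering of blowup.\<close>

definition blowup_mat :: "nat \<Rightarrow> 'a::semiring_1 mat \<Rightarrow> (nat \<Rightarrow> 'a) \<Rightarrow> 'a mat" where
  "blowup_mat t K c = mat (t * dim_row K) (t * dim_row K)
     (\<lambda>(x,y). K $$ (x div t, y div t) + (if x = y then c (x div t) else 0))"

definition quotient_mat :: "nat \<Rightarrow> 'a::semiring_1 mat \<Rightarrow> (nat \<Rightarrow> 'a) \<Rightarrow> 'a mat" where
  "quotient_mat t K c = of_nat t \<cdot>\<^sub>m K + mat_diag (dim_row K) c"

definition blowup_block_mat :: "nat \<Rightarrow> 'a::semiring_1 mat \<Rightarrow> (nat \<Rightarrow> 'a) \<Rightarrow> 'a mat" where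
  "blowup_block_mat t K c = four_block_mat
     (quotient_mat t K c) (0\<^sub>m (dim_row K) (dim_row K * (t - 1)))
     (0\<^sub>m (dim_row K * (t - 1)) (dim_row K)) (mat_diag (dim_row K * (t - 1)) (\<lambda>i. c (i div (t - 1))))"

lemma blowup_mat_carrier: "K \<in> carrier_mat n n \<Longrightarrow> blowup_mat t K c \<in> carrier_mat (t*n) (t*n)"
  by (simp add: blowup_mat_def)

lemma add_mult_pred_eq: "0 < t \<Longrightarrow> n + n * (t - 1) = t * (n::nat)"
  by (cases t) simp_all

lemma blowup_block_mat_carrier:
  assumes "K \<in> carrier_mat n n" "t > 0"
  shows "blowup_block_mat t K c \<in> carrier_mat (t*n) (t*n)"
  unfolding add_mult_pred_eq[OF assms(2), symmetric]
  using assms(1) by (simp add: blowup_block_mat_def quotient_mat_def)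

lemma index_blowup_block_mat:
  assumes "K \<in> carrier_mat n n" "t > 0" "i < t*n" "j < t*n"
  shows "blowup_block_mat t K c $$ (i,j) =
    (if i < n \<and> j < n then of_nat t * K $$ (i,j) + (if i = j then c i else 0)
     else if i = j then c (diff_class t n j) else 0)"
  using assms unfolding add_mult_pred_eq[OF assms(2), symmetric]
  by (auto simp: blowup_block_mat_def quotient_mat_def mat_diag_def diff_class_def)

lemma index_blowup_mat_mult_class_basis:
  fixes K :: "'a::comm_ring_1 mat"
  assumes K: "K \<in> carrier_mat n n" and x: "x < t*n" and j: "j < t*n"
  shows "(blowup_mat t K c * class_basis t n) $$ (x,j) =
    (if j < n then of_nat t * K $$ (x div t, j) + (if x div t = j then c j else 0)
     else class_basis t n $$ (x,j) * c (diff_class t n j))"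
proof -
  let ?B = "blowup_mat t K c"
  have t: "t > 0" using x by (cases t) simp_all
  have B: "?B $$ (x,y) = K $$ (x div t, y div t) + (if x = y then c (x div t) else 0)" if "y < t*n" for y
    using K x that by (simp add: blowup_mat_def)
  have "(?B * class_basis t n) $$ (x,j) = (if j < n then (\<Sum>k<t. ?B $$ (x, j*t + k))
     else ?B $$ (x, diff_vertex t n j) - ?B $$ (x, diff_class t n j * t))"
    unfolding index_mult_mat_sum[OF blowup_mat_carrier[OF K] class_basis_carrier x j]
    by (rule mult_class_basis_col[OF j])
  also have "\<dots> = (if j < n then of_nat t * K $$ (x div t, j) + (if x div t = j then c j else 0)
     else class_basis t n $$ (x,j) * c (diff_class t n j))"
  proof (cases "j < n")
    case True
    have hit: "x = j*t + k \<longleftrightarrow> x div t = j \<and> k = x mod t" if "k < t" for k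
      using mult_add_eq_mult_add_iff[of k t "x mod t" j "x div t"] that t div_mult_mod_eq[of x t] by auto
    have "(\<Sum>k<t. ?B $$ (x, j*t + k))
        = (\<Sum>k<t. K $$ (x div t, j) + (if x div t = j then (if k = x mod t then c j else 0) else 0))"
      using B mult_add_less_mult[OF True] hit by (intro sum.cong refl) simp
    also have "\<dots> = of_nat t * K $$ (x div t, j) + (if x div t = j then c j else 0)"
      using t by (simp add: sum.distrib)
    finally show ?thesis using True by simp
  next
    case False
    then have "n \<le> j" by simp
    note d = diff_vertex[OF this j]
    have "?B $$ (x, diff_vertex t n j) - ?B $$ (x, diff_class t n j * t)
        = ((if x = diff_vertex t n j then 1 else 0) - (if x = diff_class t n j * t then 1 else 0))
          * c (diff_class t n j)"
      using B d t by (simp add: left_diff_distrib)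
    then show ?thesis using False x j by (simp add: class_basis_def)
  qed
  finally show ?thesis .
qed

lemma index_class_basis_mult_blowup_block_mat:
  fixes K :: "'a::comm_ring_1 mat"
  assumes K: "K \<in> carrier_mat n n" and x: "x < t*n" and j: "j < t*n"
  shows "(class_basis t n * blowup_block_mat t K c) $$ (x,j) =
    (if j < n then of_nat t * K $$ (x div t, j) + (if x div t = j then c j else 0)
     else class_basis t n $$ (x,j) * c (diff_class t n j))"
proof -
  let ?P = "class_basis t n :: 'a mat" and ?R = "blowup_block_mat t K c"
  have t: "t > 0" using x by (cases t) simp_all
  have R: "?R $$ (i,j) = (if i < n \<and> j < n then of_nat t * K $$ (i,j) + (if i = j then c i else 0)
     else if i = j then c (diff_class t n j) else 0)" if "i < t*n" for i
    using index_blowup_block_mat[OF K t that j] .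
  have xn: "x div t < n" using x by (simp add: less_mult_imp_div_less mult.commute)
  have "n \<le> t*n" using t by (cases t) simp_all
  with xn have xtn: "x div t < t*n" by linarith
  have "(?P * ?R) $$ (x,j) = (\<Sum>i\<in>{0..<t*n}. ?P $$ (x,i) * ?R $$ (i,j))"
    by (rule index_mult_mat_sum[OF class_basis_carrier blowup_block_mat_carrier[OF K t] x j])
  also have "\<dots> = (if j < n then ?R $$ (x div t, j) else ?P $$ (x,j) * c (diff_class t n j))"
  proof (cases "j < n")
    case True
    have "(\<Sum>i\<in>{0..<t*n}. ?P $$ (x,i) * ?R $$ (i,j)) = (\<Sum>i\<in>{0..<t*n}. if i = x div t then ?R $$ (x div t, j) else 0)"
      using True x R by (intro sum.cong refl) (auto simp: class_basis_def)
    also have "\<dots> = ?R $$ (x div t, j)"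
      using xtn by simp
    finally show ?thesis using True by simp
  next
    case False
    have "(\<Sum>i\<in>{0..<t*n}. ?P $$ (x,i) * ?R $$ (i,j)) = (\<Sum>i\<in>{0..<t*n}. if i = j then ?P $$ (x,j) * c (diff_class t n j) else 0)"
      using False R by (intro sum.cong refl) simp
    then show ?thesis using False j by simp
  qed
  finally show ?thesis using R[OF xtn] xn by simp
qed

lemma blowup_mat_mult_class_basis:
  fixes K :: "'a::comm_ring_1 mat"
  assumes K: "K \<in> carrier_mat n n" and t: "t > 0"
  shows "blowup_mat t K c * class_basis t n = class_basis t n * blowup_block_mat t K c"
proof (rule eq_matI)
  fix x j
  assume "x < dim_row (class_basis t n * blowup_block_mat t K c)"
    and "j < dim_col (class_basis t n * blowup_block_mat t K c)"
  then have "x < t*n" "j < t*n"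
    using carrier_matD[OF blowup_block_mat_carrier[OF K t]] by (simp_all add: class_basis_def)
  then show "(blowup_mat t K c * class_basis t n) $$ (x,j) = (class_basis t n * blowup_block_mat t K c) $$ (x,j)"
    by (simp only: index_blowup_mat_mult_class_basis[OF K] index_class_basis_mult_blowup_block_mat[OF K])
qed (use K carrier_matD[OF blowup_block_mat_carrier[OF K t]] in \<open>simp_all add: blowup_mat_def class_basis_def\<close>)

lemma similar_blowup_block_mat:
  fixes K :: "'a::field_char_0 mat"
  assumes K: "K \<in> carrier_mat n n" and t: "t > 0"
  shows "similar_mat (blowup_mat t K c) (blowup_block_mat t K c)"
proof -
  let ?B = "blowup_mat t K c" and ?R = "blowup_block_mat t K c"
  let ?P = "class_basis t n :: 'a mat" and ?Q = "class_basis_inv t n :: 'a mat"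
  have carr: "?B \<in> carrier_mat (t*n) (t*n)" "?R \<in> carrier_mat (t*n) (t*n)"
    "?P \<in> carrier_mat (t*n) (t*n)" "?Q \<in> carrier_mat (t*n) (t*n)"
    by (rule blowup_mat_carrier[OF K] blowup_block_mat_carrier[OF K t] class_basis_carrier class_basis_inv_carrier)+
  have QP: "?Q * ?P = 1\<^sub>m (t*n)" by (rule class_basis_inv_mult[OF t])
  have PQ: "?P * ?Q = 1\<^sub>m (t*n)" by (rule mat_mult_left_right_inverse[OF carr(4,3) QP])
  have "?B = ?B * (?P * ?Q)" by (simp add: PQ right_mult_one_mat[OF carr(1)])
  also have "\<dots> = ?B * ?P * ?Q" by (rule assoc_mult_mat[symmetric, OF carr(1,3,4)])
  also have "\<dots> = ?P * ?R * ?Q" unfolding blowup_mat_mult_class_basis[OF K t] ..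
  finally have "similar_mat_wit ?B ?R ?P ?Q"
    unfolding similar_mat_wit_def Let_def carrier_matD(1)[OF carr(1)] using carr PQ QP by simp
  then show ?thesis unfolding similar_mat_def by blast
qed

lemma mset_map_div_upt:
  "mset (map (\<lambda>i. f (i div a)) [0..<n*a]) = repeat_mset a (mset (map f [0..<n]))"
proof (induction n)
  case (Suc n)
  have "[0..<Suc n * a] = [0..<n*a] @ [n*a..<n*a + a]"
    using upt_add_eq_append[of 0 "n*a" a] by (simp add: add.commute)
  moreover have "map (\<lambda>i. f (i div a)) [n*a..<n*a + a] = replicate a (f n)"
    by (rule nth_equalityI) auto
  ultimately show ?case using Suc by simp
qed simp

lemma eigenvalue_mset_blowup_mat:
  assumes K: "K \<in> carrier_mat n n" and t: "t > 0"
    and M: "eigenvalue_mset (quotient_mat t K c) M"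
  shows "eigenvalue_mset (blowup_mat t K c) (M + repeat_mset (t - 1) (mset (map c [0..<n])))"
proof -
  let ?D = "mat_diag (n * (t - 1)) (\<lambda>i. c (i div (t - 1)))"
  have D: "?D \<in> carrier_mat (n * (t - 1)) (n * (t - 1))" by simp
  have "diag_mat ?D = map (\<lambda>i. c (i div (t - 1))) [0..<n * (t - 1)]"
    by (rule nth_equalityI) (simp_all add: diag_mat_def mat_diag_def)
  then have cpD: "char_poly ?D = (\<Prod>a\<leftarrow>map (\<lambda>i. c (i div (t - 1))) [0..<n * (t - 1)]. [:- a, 1:])"
    using char_poly_upper_triangular[OF D] by (simp add: upper_triangular_def mat_diag_def)
  obtain xs where xs: "M = mset xs" using ex_mset[of M] by metis
  have cpQ: "char_poly (quotient_mat t K c) = (\<Prod>a\<leftarrow>xs. [:- a, 1:])"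
    using M unfolding eigenvalue_mset_def xs by (simp only: mset_map[symmetric] prod_mset_prod_list)
  have Q: "quotient_mat t K c \<in> carrier_mat n n" using K by (simp add: quotient_mat_def)
  have "char_poly (blowup_mat t K c) = char_poly (blowup_block_mat t K c)"
    by (rule char_poly_similar[OF similar_blowup_block_mat[OF K t]])
  also have "\<dots> = char_poly (quotient_mat t K c) * char_poly ?D"
  proof (rule char_poly_0_block[OF _ _ _ Q _ D])
    show "\<exists>es. char_poly (quotient_mat t K c) = (\<Prod>a\<leftarrow>es. [:- a, 1:])"
      "\<exists>es. char_poly ?D = (\<Prod>a\<leftarrow>es. [:- a, 1:])"
      using cpQ cpD by blast+
  qed (use K in \<open>auto simp: blowup_block_mat_def\<close>)
  also have "\<dots> = (\<Prod>a\<in>#M + repeat_mset (t - 1) (mset (map c [0..<n])). [:- a, 1:])"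
    unfolding cpQ cpD xs mset_map_div_upt[symmetric]
    by (simp only: mset_append[symmetric] mset_map[symmetric] prod_mset_prod_list map_append prod_list.append)
  finally show ?thesis unfolding eigenvalue_mset_def .
qed

section \<open>Affine images of spectra\<close>

lemma poly_prod_mset_affine_roots:
  fixes a b x :: "'a::field"
  assumes "a \<noteq> 0"
  shows "poly (\<Prod>q\<in>#M. [:- (a*q + b), 1:]) x = a ^ size M * poly (\<Prod>q\<in>#M. [:- q, 1:]) ((x - b) / a)"
proof (induction M)
  case (add q M)
  have eq: "x - (a*q + b) = a * ((x - b) / a - q)" using assms by (simp add: field_simps)
  have L: "poly (\<Prod>q\<in>#add_mset q M. [:- (a*q + b), 1:]) x
      = (x - (a*q + b)) * poly (\<Prod>q\<in>#M. [:- (a*q + b), 1:]) x"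
    by (simp add: algebra_simps)
  have R: "poly (\<Prod>q\<in>#add_mset q M. [:- q, 1:]) y = (y - q) * poly (\<Prod>q\<in>#M. [:- q, 1:]) y" for y
    by (simp add: algebra_simps)
  show ?case unfolding L add.IH eq R size_add_mset power_Suc by (simp only: mult_ac)
qed simp

lemma eigenvalue_mset_affine:
  fixes A :: "real mat"
  assumes A: "A \<in> carrier_mat n n" and a: "a \<noteq> 0" and M: "eigenvalue_mset A M"
  shows "eigenvalue_mset (a \<cdot>\<^sub>m A + b \<cdot>\<^sub>m 1\<^sub>m n) (image_mset (\<lambda>q. a*q + b) M)"
proof -
  let ?B = "a \<cdot>\<^sub>m A + b \<cdot>\<^sub>m 1\<^sub>m n"
  have B: "?B \<in> carrier_mat n n" using A by simp
  obtain xs where xs: "M = mset xs" using ex_mset[of M] by metis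
  have "size M = n"
    using degree_monic_char_poly[OF A] M degree_linear_factors[of uminus xs]
    unfolding eigenvalue_mset_def xs by (simp only: mset_map[symmetric] prod_mset_prod_list size_mset)
  have "poly (char_poly ?B) x = poly (\<Prod>q\<in>#M. [:- (a*q + b), 1:]) x" for x
  proof -
    have "- char_matrix ?B x = a \<cdot>\<^sub>m (- char_matrix A ((x - b) / a))"
      by (rule eq_matI) (use A a in \<open>auto simp: char_matrix_def field_simps\<close>)
    then have "poly (char_poly ?B) x = a ^ n * det (- char_matrix A ((x - b) / a))"
      using char_poly_matrix[OF B] carrier_matD[OF char_matrix_closed[OF A]] by simp
    also have "\<dots> = poly (\<Prod>q\<in>#M. [:- (a*q + b), 1:]) x"
      using char_poly_matrix[OF A] M poly_prod_mset_affine_roots[OF a] \<open>size M = n\<close>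
      by (simp add: eigenvalue_mset_def)
    finally show ?thesis .
  qed
  then have "char_poly ?B = (\<Prod>q\<in>#M. [:- (a*q + b), 1:])" by (rule poly_ext)
  then show ?thesis by (simp add: eigenvalue_mset_def image_mset.compositionality o_def)
qed

section \<open>The complement of a blowup\<close>

lemma card_filter_add_card_filter_not:
  "card {j. j < n \<and> P j} + card {j. j < n \<and> \<not> P j} = n"
proof -
  have "{j. j < n \<and> P j} \<union> {j. j < n \<and> \<not> P j} = {..<n}"
    and "{j. j < n \<and> P j} \<inter> {j. j < n \<and> \<not> P j} = {}" by auto
  then show ?thesis using card_Un_disjoint[of "{j. j < n \<and> P j}" "{j. j < n \<and> \<not> P j}"] by simp
qed

lemma degree_complement:
  assumes "\<not> E u u" "u < n"
  shows "degree n (complement E) u + degree n E u + 1 = n"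
proof -
  let ?N = "{j. j < n \<and> \<not> E u j}"
  have "{j. j < n \<and> complement E u j} = ?N - {u}" by (auto simp: complement_def)
  moreover have "card ?N = Suc (card (?N - {u}))" by (rule card.remove) (use assms in simp_all)
  ultimately have "degree n (complement E) u + 1 = card ?N" by (simp add: degree_def)
  then show ?thesis using card_filter_add_card_filter_not[of n "E u"] by (simp add: degree_def)
qed

lemma degree_complement_blowup:
  assumes "\<not> E (x div t) (x div t)" "x < t*n"
  shows "degree (t*n) (complement (blowup t E)) x + 1 + t * degree n E (x div t) = t*n"
proof -
  let ?N = "{y. y < t*n \<and> \<not> E (x div t) (y div t)}"
  have "{y. y < t*n \<and> complement (blowup t E) x y} = ?N - {x}"
    by (auto simp: complement_def blowup_def)
  moreover have "card ?N = Suc (card (?N - {x}))" by (rule card.remove) (use assms in simp_all)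
  ultimately have "degree (t*n) (complement (blowup t E)) x + 1 = card ?N" by (simp add: degree_def)
  also have "\<dots> = t * card {v. v < n \<and> \<not> E (x div t) v}" by (rule card_upt_class)
  moreover have "t * degree n E (x div t) + t * card {v. v < n \<and> \<not> E (x div t) v} = t * n"
    using card_filter_add_card_filter_not[of n "E (x div t)"] by (simp add: degree_def flip: add_mult_distrib2)
  ultimately show ?thesis by linarith
qed

definition nonadjacency_mat :: "nat \<Rightarrow> (nat \<Rightarrow> nat \<Rightarrow> bool) \<Rightarrow> real mat" where
  "nonadjacency_mat n E = mat n n (\<lambda>(u,v). if E u v then 0 else 1)"

lemma signless_laplacian_complement_blowup:
  assumes irr: "\<forall>u<n. \<not> E u u"
  shows "signless_laplacian (t*n) (complement (blowup t E)) =
    blowup_mat t (nonadjacency_mat n E) (\<lambda>u. real t * real n - real t * real (degree n E u) - 2)"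
    (is "?S = ?B")
proof (rule eq_matI)
  fix x y assume "x < dim_row ?B" "y < dim_col ?B"
  then have x: "x < t*n" and y: "y < t*n" by (simp_all add: blowup_mat_def nonadjacency_mat_def)
  have cx: "x div t < n" and cy: "y div t < n" using x y by (simp_all add: less_mult_imp_div_less mult.commute)
  have "real (degree (t*n) (complement (blowup t E)) x) + 1 + real t * real (degree n E (x div t)) = real t * real n"
    using arg_cong[where f=real, OF degree_complement_blowup[where E=E and x=x and t=t and n=n, OF irr[rule_format, OF cx] x]]
    by simp
  then have deg: "real (degree (t*n) (complement (blowup t E)) x) = real t * real n - real t * real (degree n E (x div t)) - 1"
    by linarith
  show "?S $$ (x,y) = ?B $$ (x,y)"
  proof (cases "x = y")
    case True
    then show ?thesis using x cx irr deg by (simp add: signless_laplacian_def blowup_mat_def nonadjacency_mat_def)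
  next
    case False
    then show ?thesis using x y cx cy
      by (simp add: signless_laplacian_def blowup_mat_def nonadjacency_mat_def complement_def blowup_def)
  qed
qed (simp_all add: signless_laplacian_def blowup_mat_def nonadjacency_mat_def)

lemma quotient_mat_nonadjacency_mat:
  assumes irr: "\<forall>u<n. \<not> E u u"
  shows "quotient_mat t (nonadjacency_mat n E) (\<lambda>u. real t * real n - real t * real (degree n E u) - 2) =
    real t \<cdot>\<^sub>m signless_laplacian n (complement E) + (2 * (real t - 1)) \<cdot>\<^sub>m 1\<^sub>m n"
    (is "?Q = ?R")
proof (rule eq_matI)
  fix u v assume "u < dim_row ?R" "v < dim_col ?R"
  then have u: "u < n" and v: "v < n" by (simp_all add: signless_laplacian_def)
  have dc: "real (degree n (complement E) u) = real n - 1 - real (degree n E u)"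
    using degree_complement[where E=E and u=u and n=n, OF irr[rule_format, OF u] u] by (simp flip: of_nat_add)
  have "real t * real (degree n (complement E) u) + 2 * (real t - 1)
      = real t + (real t * real n - real t * real (degree n E u) - 2)"
    unfolding dc by (simp add: algebra_simps)
  then show "?Q $$ (u,v) = ?R $$ (u,v)"
    using u v irr by (cases "u = v") (simp_all add: quotient_mat_def nonadjacency_mat_def mat_diag_def
        signless_laplacian_def complement_def)
qed (simp_all add: quotient_mat_def nonadjacency_mat_def signless_laplacian_def mat_diag_def)

theorem theorem10:
  fixes n t :: nat and E :: "nat \<Rightarrow> nat \<Rightarrow> bool" and Qbar :: "real multiset"
  assumes "t \<ge> 2"
    and "simple_graph n E"
    and "eigenvalue_mset (signless_laplacian n (complement E)) Qbar"
  shows "eigenvalue_mset (signless_laplacian (t * n) (complement (blowup t E)))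
           (image_mset (\<lambda>q. real t * q + 2 * (real t - 1)) Qbar
            + repeat_mset (t - 1)
                (mset (map (\<lambda>i. real t * real n - real t * real (degree n E i) - 2) [0..<n])))"
proof -
  have irr: "\<forall>u<n. \<not> E u u" using assms(2) by (simp add: simple_graph_def)
  have t: "t > 0" and "real t \<noteq> 0" using assms(1) by simp_all
  let ?c = "\<lambda>u. real t * real n - real t * real (degree n E u) - 2"
  have "eigenvalue_mset (real t \<cdot>\<^sub>m signless_laplacian n (complement E) + (2 * (real t - 1)) \<cdot>\<^sub>m 1\<^sub>m n)
      (image_mset (\<lambda>q. real t * q + 2 * (real t - 1)) Qbar)"
    by (rule eigenvalue_mset_affine[OF _ \<open>real t \<noteq> 0\<close> assms(3)]) (simp add: signless_laplacian_def)
  then have "eigenvalue_mset (quotient_mat t (nonadjacency_mat n E) ?c)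
      (image_mset (\<lambda>q. real t * q + 2 * (real t - 1)) Qbar)"
    unfolding quotient_mat_nonadjacency_mat[where t=t and n=n and E=E, OF irr] .
  moreover have "nonadjacency_mat n E \<in> carrier_mat n n" by (simp add: nonadjacency_mat_def)
  ultimately have "eigenvalue_mset (blowup_mat t (nonadjacency_mat n E) ?c)
      (image_mset (\<lambda>q. real t * q + 2 * (real t - 1)) Qbar + repeat_mset (t - 1) (mset (map ?c [0..<n])))"
    using eigenvalue_mset_blowup_mat[OF _ t] by blast
  then show ?thesis
    unfolding signless_laplacian_complement_blowup[where t=t and n=n and E=E, OF irr] .
qed

end
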